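(* MPS is not sd-weakly-strategyproof on the domain of strict linear orders over bundles. Concretely, for $n=2$, $p=2$, $D_F=\{1_F,2_F\}$, $D_B=\{1_B,2_B\}$, with true preferences $1_F2_B\succ_1 1_F1_B\succ_1 2_F1_B\succ_1 2_F2_B$ and $1_F1_B\succ_2 2_F1_B\succ_2 2_F2_B\succ_2 1_F2_B$, if agent 1 reports $2_F1_B\succ'_1 1_F1_B\succ'_1 1_F2_B\succ'_1 2_F2_B$, then agent 1's MPS allocation under the misreport weakly stochastically dominates her truthful MPS allocation w.r.t. $\succ_1$ and differs from it.
   Context: Setting: agents $N=\{1,\dots,n\}$; types $D_i$ pairwise disjoint, $|D_i|=n$, unit supply; bundles $\mathcal D=\prod_i D_i$; strict linear orders $\succ_j$ on $\mathcal D$. An assignment is an $n\times|\mathcal D|$ matrix $(p_{j,x})$ with entries in $[0,1]$, rows summing to $1$, and $\sum_j\sum_{x\ni o}p_{j,x}=1$ for each item $o$. $U(\succ,x)=\{y:y\succ x\}\cup\{x\}$; $p$ weakly stochastically dominates $q$ w.r.t. $\succ$ if $\sum_{y\in U(\succ,x)}p_y\ge\sum_{y\in U(\succ,x)}q_y$ for all $x$. A mechanism $f$ is sd-weakly-strategyproof if for every profile $R$, agent $j$ and report $\succ'_j$, with $R'=(\succ'_j,\succ_{-j})$: if $f(R')_j$ weakly stochastically dominates $f(R)_j$ w.r.t. $\succ_j$ then $f(R')_j=f(R)_j$. MPS: items start with supply $1$; a bundle is available if all its items have positive remaining supply. Continuously in time each agent eats her (reported) most preferred available bundle at rate $1$ (each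 item of it consumed at rate $1$, $p_{j,x}$ growing at rate $1$); exhausted items make all bundles containing them unavailable; run until all items are exhausted. *)

theory Defs
  imports Main Complex_Main
begin

(* A bundle is represented by the list of
  its items (one item of each type); item o belongs to bundle x iff o <in> set x.
  A strict linear order over the bundles is represented by a ranking list
  (best first, distinct, containing every bundle exactly once). *)

type_synonym 'i bdl = "'i list"
type_synonym 'i ranking = "'i bdl list"
type_synonym 'i assignment = "nat \<Rightarrow> 'i bdl \<Rightarrow> real"

definition upper :: "'i ranking \<Rightarrow> 'i bdl \<Rightarrow> 'i bdl set" where
  "upper r x = set (takeWhile (\<lambda>y. y \<noteq> x) r) \<union> {x}"

definition sd_dom :: "'i ranking \<Rightarrow> ('i bdl \<Rightarrow> real) \<Rightarrow> ('i bdl \<Rightarrow> real) \<Rightarrow> bool" where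
  "sd_dom r p q = (\<forall>x\<in>set r. sum p (upper r x) \<ge> sum q (upper r x))"

(* The continuous
  eating process is piecewise linear; we simulate it phase by phase. *)

definition available :: "('i \<Rightarrow> real) \<Rightarrow> 'i bdl \<Rightarrow> bool" where
  "available s x = (\<forall>a\<in>set x. 0 < s a)"

definition eating :: "('i \<Rightarrow> real) \<Rightarrow> 'i ranking \<Rightarrow> 'i bdl option" where
  "eating s r = find (available s) r"

definition rate :: "nat \<Rightarrow> (nat \<Rightarrow> 'i ranking) \<Rightarrow> ('i \<Rightarrow> real) \<Rightarrow> 'i \<Rightarrow> nat" where
  "rate n prefs s a = card {j. j < n \<and> (\<exists>x. eating s (prefs j) = Some x \<and> a \<in> set x)}"

definition mps_step :: "nat \<Rightarrow> 'i set \<Rightarrow> (nat \<Rightarrow> 'i ranking) \<Rightarrow>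
    ('i \<Rightarrow> real) \<times> 'i assignment \<Rightarrow> ('i \<Rightarrow> real) \<times> 'i assignment" where
  "mps_step n Os prefs st =
    (let s = fst st; P = snd st; c = rate n prefs s;
         active = {a \<in> Os. 0 < c a} in
     if active = {} then st
     else
       (let d = Min ((\<lambda>a. s a / real (c a)) ` active) in
        (\<lambda>a. s a - d * real (c a),
         \<lambda>j x. P j x + (if j < n \<and> eating s (prefs j) = Some x then d else 0))))"

(* Each phase exhausts at least one item, so card Os phases suffice; once no
  agent has an available bundle the step is the identity. *)
definition mps :: "nat \<Rightarrow> 'i set \<Rightarrow> (nat \<Rightarrow> 'i ranking) \<Rightarrow> 'i assignment" where
  "mps n Os prefs = snd ((mps_step n Os prefs ^^ card Os) (\<lambda>a. 1, \<lambda>j x. 0))"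

datatype item = F1 | F2 | B1 | B2

definition items :: "item set" where
  "items = {F1, F2, B1, B2}"

definition true_prefs :: "nat \<Rightarrow> item ranking" where
  "true_prefs j = (if j = 0 then [[F1,B2],[F1,B1],[F2,B1],[F2,B2]]
                   else [[F1,B1],[F2,B1],[F2,B2],[F1,B2]])"

definition mis_prefs :: "nat \<Rightarrow> item ranking" where
  "mis_prefs = true_prefs(0 := [[F2,B1],[F1,B1],[F1,B2],[F2,B2]])"

end

theory Submission
  imports Defs
begin

text \<open>Truthfully, both agents start on bundles containing \<open>1_F\<close>, which runs out at time 1/2;
the manipulator then shares \<open>2_F1_B\<close> and \<open>2_F2_B\<close> with the other agent and ends with the
probabilities (1/2, 0, 1/4, 1/4) along her true order. If she instead claims \<open>2_F1_B\<close> first,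
the two agents exhaust \<open>1_B\<close> at time 1/2; the other agent then moves on to \<open>2_F2_B\<close>, leaving her
true favourite \<open>1_F2_B\<close> to her alone, so she ends with (1/2, 0, 1/2, 0), which dominates.\<close>

lemma card_less_two_Collect:
  "card {j. j < (2::nat) \<and> P j} = of_bool (P 0) + of_bool (P 1)"
proof -
  have "{j. j < (2::nat) \<and> P j} = (if P 0 then {0} else {}) \<union> (if P 1 then {1} else {})"
    by (auto dest: less_2_cases)
  then show ?thesis by (simp only:) (cases "P 0"; cases "P 1"; simp)
qed

lemma rate_two_agents:
  "rate 2 prefs s a =
     of_bool (\<exists>x. eating s (prefs 0) = Some x \<and> a \<in> set x) +
     of_bool (\<exists>x. eating s (prefs 1) = Some x \<and> a \<in> set x)"
  unfolding rate_def by (rule card_less_two_Collect)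

lemma eating_available: "eating s r = Some x \<Longrightarrow> available s x"
  unfolding eating_def by (auto simp: find_Some_iff)

lemma rate_pos_imp_supply_pos:
  assumes "0 < rate n prefs s a"
  shows "0 < s a"
proof -
  have "{j. j < n \<and> (\<exists>x. eating s (prefs j) = Some x \<and> a \<in> set x)} \<noteq> {}"
    using assms unfolding rate_def by (metis card.empty less_irrefl)
  then obtain j x where "eating s (prefs j) = Some x" "a \<in> set x" by blast
  then show ?thesis using eating_available available_def by metis
qed

lemma mps_step_exhausted: "mps_step n Os prefs (\<lambda>_. 0, P) = (\<lambda>_. 0, P)"
proof -
  have "{a \<in> Os. 0 < rate n prefs (\<lambda>_. 0) a} = {}"
    using rate_pos_imp_supply_pos[of n prefs "\<lambda>_. 0"] by auto
  then show ?thesis unfolding mps_step_def Let_def by simp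
qed

lemma mps_step_phase:
  assumes "\<forall>a. real (rate n prefs s a) = c a"
    and "\<forall>a. a \<in> A \<longleftrightarrow> a \<in> Os \<and> 0 < c a" and "A \<noteq> {}"
    and "Min ((\<lambda>a. s a / c a) ` A) = d"
    and "\<forall>a. s' a = s a - d * c a"
  shows "mps_step n Os prefs (s, P) =
    (s', \<lambda>j x. P j x + (if j < n \<and> eating s (prefs j) = Some x then d else 0))"
proof -
  have "\<And>a. 0 < rate n prefs s a \<longleftrightarrow> 0 < c a"
    using assms(1) by (metis of_nat_0_less_iff)
  then have "{a \<in> Os. 0 < rate n prefs s a} = A"
    using assms(2) by auto
  then show ?thesis
    using assms unfolding mps_step_def Let_def by (simp add: fun_eq_iff)
qed

lemma all_item: "(\<forall>a. Q a) \<longleftrightarrow> Q F1 \<and> Q F2 \<and> Q B1 \<and> Q B2"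
  by (metis item.exhaust)

text \<open>Supply and eating-rate vectors are written with \<open>case_item\<close>, entries for
\<open>1_F, 2_F, 1_B, 2_B\<close> in that order.\<close>

lemma true_phase1:
  "mps_step 2 items true_prefs (\<lambda>_. 1, P) = (case_item 0 1 (1/2) (1/2),
     \<lambda>j x. P j x + (if j < 2 \<and> eating (\<lambda>_. 1) (true_prefs j) = Some x then 1/2 else 0))"
  by (rule mps_step_phase[where c = "case_item 2 0 1 1" and A = "{F1, B1, B2}" and d = "1/2"];
      simp add: all_item items_def rate_two_agents eating_def available_def true_prefs_def)

lemma true_phase2:
  "mps_step 2 items true_prefs (case_item 0 1 (1/2) (1/2), P) = (case_item 0 (1/2) 0 (1/2),
     \<lambda>j x. P j x +
       (if j < 2 \<and> eating (case_item 0 1 (1/2) (1/2)) (true_prefs j) = Some x then 1/4 else 0))"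
  by (rule mps_step_phase[where c = "case_item 0 2 2 0" and A = "{F2, B1}" and d = "1/4"];
      simp add: all_item items_def rate_two_agents eating_def available_def true_prefs_def)

lemma true_phase3:
  "mps_step 2 items true_prefs (case_item 0 (1/2) 0 (1/2), P) = (\<lambda>_. 0,
     \<lambda>j x. P j x +
       (if j < 2 \<and> eating (case_item 0 (1/2) 0 (1/2)) (true_prefs j) = Some x then 1/4 else 0))"
  by (rule mps_step_phase[where c = "case_item 0 2 0 2" and A = "{F2, B2}" and d = "1/4"];
      simp add: all_item items_def rate_two_agents eating_def available_def true_prefs_def)

lemma mis_phase1:
  "mps_step 2 items mis_prefs (\<lambda>_. 1, P) = (case_item (1/2) (1/2) 0 1,
     \<lambda>j x. P j x + (if j < 2 \<and> eating (\<lambda>_. 1) (mis_prefs j) = Some x then 1/2 else 0))"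
  by (rule mps_step_phase[where c = "case_item 1 1 2 0" and A = "{F1, F2, B1}" and d = "1/2"];
      simp add: all_item items_def rate_two_agents eating_def available_def
        mis_prefs_def true_prefs_def)

lemma mis_phase2:
  "mps_step 2 items mis_prefs (case_item (1/2) (1/2) 0 1, P) = (\<lambda>_. 0,
     \<lambda>j x. P j x +
       (if j < 2 \<and> eating (case_item (1/2) (1/2) 0 1) (mis_prefs j) = Some x then 1/2 else 0))"
  by (rule mps_step_phase[where c = "case_item 1 1 0 2" and A = "{F1, F2, B2}" and d = "1/2"];
      simp add: all_item items_def rate_two_agents eating_def available_def
        mis_prefs_def true_prefs_def)

lemma mps_items_four_phases:
  "mps n items prefs =
     snd (mps_step n items prefs (mps_step n items prefs (mps_step n items prefs
       (mps_step n items prefs (\<lambda>_. 1, \<lambda>_ _. 0)))))"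
proof -
  have "card items = Suc (Suc (Suc (Suc 0)))" by (simp add: items_def)
  then show ?thesis unfolding mps_def by simp
qed

lemma mps_true_prefs_agent0:
  "mps 2 items true_prefs 0 =
     (\<lambda>x. if x = [F1, B2] then 1/2 else if x = [F2, B1] then 1/4 else if x = [F2, B2] then 1/4 else 0)"
proof -
  have "eating (\<lambda>_. 1) (true_prefs 0) = Some [F1, B2]"
    "eating (case_item 0 1 (1/2) (1/2)) (true_prefs 0) = Some [F2, B1]"
    "eating (case_item 0 (1/2) 0 (1/2)) (true_prefs 0) = Some [F2, B2]"
    by (simp_all add: eating_def available_def true_prefs_def)
  then show ?thesis
    by (simp add: mps_items_four_phases true_phase1 true_phase2 true_phase3 mps_step_exhausted
        fun_eq_iff)
qed

lemma mps_mis_prefs_agent0: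
  "mps 2 items mis_prefs 0 = (\<lambda>x. if x = [F2, B1] then 1/2 else if x = [F1, B2] then 1/2 else 0)"
proof -
  have "eating (\<lambda>_. 1) (mis_prefs 0) = Some [F2, B1]"
    "eating (case_item (1/2) (1/2) 0 1) (mis_prefs 0) = Some [F1, B2]"
    by (simp_all add: eating_def available_def mis_prefs_def)
  then show ?thesis
    by (simp add: mps_items_four_phases mis_phase1 mis_phase2 mps_step_exhausted fun_eq_iff)
qed

lemma upper_nth:
  assumes "distinct r" "k < length r"
  shows "upper r (r ! k) = set (take (Suc k) r)"
proof -
  have "takeWhile (\<lambda>y. y \<noteq> r ! k) r = take k r"
    using assms by (intro takeWhile_eq_take_P_nth) (auto simp: nth_eq_iff_index_eq)
  then show ?thesis
    using assms by (simp add: upper_def take_Suc_conv_app_nth)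
qed

lemma sd_dom_iff_prefix_sums:
  assumes "distinct r"
  shows "sd_dom r p q \<longleftrightarrow>
    (\<forall>k < length r. sum_list (map q (take (Suc k) r)) \<le> sum_list (map p (take (Suc k) r)))"
  using assms
  by (simp add: sd_dom_def all_set_conv_all_nth upper_nth sum.distinct_set_conv_list)

theorem mainTheorem16:
  shows "sd_dom (true_prefs 0) (mps 2 items mis_prefs 0) (mps 2 items true_prefs 0)
         \<and> mps 2 items mis_prefs 0 \<noteq> mps 2 items true_prefs 0"
proof
  have "true_prefs 0 = [[F1, B2], [F1, B1], [F2, B1], [F2, B2]]"
    by (simp add: true_prefs_def)
  then show "sd_dom (true_prefs 0) (mps 2 items mis_prefs 0) (mps 2 items true_prefs 0)"
    unfolding mps_true_prefs_agent0 mps_mis_prefs_agent0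
    by (simp add: sd_dom_iff_prefix_sums numeral_eq_Suc All_less_Suc)
  show "mps 2 items mis_prefs 0 \<noteq> mps 2 items true_prefs 0"
    by (simp add: mps_true_prefs_agent0 mps_mis_prefs_agent0 fun_eq_iff exI[of _ "[F2, B1]"])
qed

end
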